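(* Let $p\geq 2$ be an even integer and let $U_p=\bigcup_{n\in 2\mathbb Z_+}\mathbb Z_p^n$. Let $\tau\in\{1,\ldots,p\}$ be such that $\tau\equiv 0\pmod 2$, $\tau\mid p$ and $p/\tau\equiv 0\pmod 2$. Let $\boldsymbol a,\boldsymbol b\in U_p$ be equivalent (in the sense defined in the context). Then $\mu_{p,\tau}(\boldsymbol a)=\mu_{p,\tau}(\boldsymbol b)$.
   Context: $\mathbb Z_+$ denotes the positive integers and $\mathbb Z_p=\mathbb Z/p\mathbb Z$. Two elements of $U_p$ are called equivalent if they are related by a finite sequence of the following transformations of $(a_1,\ldots,a_n)\in\mathbb Z_p^n$ ($n$ even): (Op1) $(a_1,\ldots,a_n)\to(a_2,\ldots,a_n,a_1)$; (Op2) $(a_1,\ldots,a_n)\to(a, a_2+(-1)^2(a_1-a),\ldots,a_i+(-1)^i(a_1-a),\ldots,a_n+(-1)^n(a_1-a))$ for any $a\in\mathbb Z_p$; (Op3) $(a_1,\ldots,a_n)\to(a, a_1-a_2+a,\ldots,a_1-a_i+a,\ldots,a_1-a_n+a)$ for any $a\in\mathbb Z_p$; (Op4) $(a_1,\ldots,a_n)\to(a_1,-a_1+a_2+a_3,a_3,\ldots,a_n)$ when $n>3$. For $\boldsymbol a=(a_1,\ldots,a_n)\in U_p$, $\tau_p(\boldsymbol a)$ is the maximum of all $k\in\{1,\ldots,p\}$ with $k\mid p$ and $a_1+a_2\equiv a_2+a_3\equiv\cdots\equiv a_n+a_1\pmod k$. For an even integer $q\ge 2$ and a tuple $(b_1,\ldots,b_m)$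 of elements of $\mathbb Z_q$, let $E$ (resp. $O$) count the number of entries that are even (resp. odd), and define $\mu_q(b_1,\ldots,b_m)=E(b_1+b_2,\ldots,b_{m-1}+b_m,b_m+b_1)-O(b_1+b_2,\ldots,b_{m-1}+b_m,b_m+b_1)$. Define $\mu_{p,\tau}:U_p\to\mathbb Z\cup\{\infty\}$ as follows. If $\tau_p(\boldsymbol a)\neq\tau$, then $\mu_{p,\tau}(\boldsymbol a)=\infty$. If $\tau_p(\boldsymbol a)=\tau$, then $a_{2j-1}-a_1$ and $a_{2j}-a_2$ are divisible by $\tau$ in $\mathbb Z_p$ for all $j$, and dividing by $\tau$ gives well-defined elements of $\mathbb Z_{p/\tau}$; set $\mu_{p,\tau}(\boldsymbol a)=\left|\mu_{p/\tau}\left(\frac{a_1-a_1}{\tau},\frac{a_2-a_2}{\tau},\frac{a_3-a_1}{\tau},\frac{a_4-a_2}{\tau},\ldots,\frac{a_{2j-1}-a_1}{\tau},\frac{a_{2j}-a_2}{\tau},\ldots,\frac{a_{n-1}-a_1}{\tau},\frac{a_n-a_2}{\tau}\right)\right|$, i.e. odd-indexed entries have $a_1$ subtracted and even-indexed entries have $a_2$ subtracted. *)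

theory Defs
  imports Main "HOL-Library.Extended_Nat"
begin

text \<open>Elements of Z_p are represented by integers in {0..<p}; a tuple
(a_1,...,a_n) is an int list (0-based: list index j is a_{j+1}).\<close>

definition Up :: "int \<Rightarrow> int list set" where
  "Up p = {xs. xs \<noteq> [] \<and> even (length xs) \<and> set xs \<subseteq> {0..<p}}"

definition op_step :: "int \<Rightarrow> int list \<Rightarrow> int list \<Rightarrow> bool" where
  "op_step p xs ys \<longleftrightarrow> xs \<in> Up p \<and>
     ( ys = rotate1 xs
     \<or> (\<exists>a::int. ys = map (\<lambda>i. (xs ! i + (-1) ^ (i + 1) * (xs ! 0 - a)) mod p) [0..<length xs])
     \<or> (\<exists>a::int. ys = map (\<lambda>i. (xs ! 0 - xs ! i + a) mod p) [0..<length xs])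
     \<or> (length xs > 3 \<and> ys = xs[1 := (- (xs ! 0) + xs ! 1 + xs ! 2) mod p]))"

definition equivalent :: "int \<Rightarrow> int list \<Rightarrow> int list \<Rightarrow> bool" where
  "equivalent p = equivclp (op_step p)"

definition cyc_sums :: "int list \<Rightarrow> int list" where
  "cyc_sums xs = map (\<lambda>i. xs ! i + xs ! ((i + 1) mod length xs)) [0..<length xs]"

definition tau_p :: "int \<Rightarrow> int list \<Rightarrow> int" where
  "tau_p p xs = Max {k \<in> {1..p}. k dvd p \<and>
      (\<forall>i < length xs. cyc_sums xs ! i mod k = cyc_sums xs ! 0 mod k)}"

definition mu_q :: "int \<Rightarrow> int list \<Rightarrow> int" where
  "mu_q q bs = int (length (filter (\<lambda>s. even (s mod q)) (cyc_sums bs)))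
             - int (length (filter (\<lambda>s. odd (s mod q)) (cyc_sums bs)))"

definition mu_p_tau :: "int \<Rightarrow> int \<Rightarrow> int list \<Rightarrow> enat" where
  "mu_p_tau p \<tau> xs = (if tau_p p xs \<noteq> \<tau> then \<infinity>
     else enat (nat \<bar>mu_q (p div \<tau>)
        (map (\<lambda>i. ((xs ! i - xs ! (i mod 2)) mod p) div \<tau>) [0..<length xs])\<bar>))"

end

theory Submission
  imports Defs "HOL-Library.Multiset"
begin

(*
  Everything is read off the cyclic sums s_i = a_i + a_(i+1). tau_p(a) is the largest divisor
  of p modulo which all s_i agree. Since 2 tau divides p, tau times the i-th cyclic sum of the
  normalised tuple is s_i - s_0 modulo p, so mu_(p,tau)(a) = |sum_i e(s_i - s_0)| with
  e(v) = 1 if 2 tau divides v and e(v) = -1 otherwise.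

  Both quantities survive changing the s_i modulo p, and they depend only on the multiset of
  distances |s_i - c| from any one cyclic sum c: moving the base point from c to c' multiplies
  every sign by e(c' - c), which only changes the sign of the sum. On cyclic sums (Op1) is a
  rotation, (Op2) is the identity modulo p, (Op3) is s |-> C - s modulo p, and (Op4) turns
  (s_0, s_1, s_2, ...) into (s_1, 2 s_1 - s_0, s_2, ...) modulo p; none of them changes the
  distances from a suitable base point.
*)

definition all_cong_mod :: "int \<Rightarrow> int list \<Rightarrow> bool" where
  "all_cong_mod k s \<longleftrightarrow> (\<forall>u\<in>set s. \<forall>v\<in>set s. k dvd u - v)"

definition parity_sign :: "int \<Rightarrow> int \<Rightarrow> int" where
  "parity_sign t v = (if 2 * t dvd v then 1 else -1)"

definition sign_balance :: "int \<Rightarrow> int \<Rightarrow> int list \<Rightarrow> int" where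
  "sign_balance t c s = sum_list (map (\<lambda>v. parity_sign t (v - c)) s)"

definition invariants_agree :: "int \<Rightarrow> int \<Rightarrow> int list \<Rightarrow> int list \<Rightarrow> bool" where
  "invariants_agree p t s s' \<longleftrightarrow>
     (\<forall>k. k dvd p \<longrightarrow> all_cong_mod k s = all_cong_mod k s') \<and>
     (all_cong_mod t s \<longrightarrow> \<bar>sign_balance t (hd s) s\<bar> = \<bar>sign_balance t (hd s') s'\<bar>)"

lemma parity_sign_cong:
  assumes "2 * t dvd a - b"
  shows "parity_sign t a = parity_sign t b"
  using assms unfolding parity_sign_def by (metis diff_add_cancel dvd_add_right_iff)

lemma parity_sign_abs [simp]: "parity_sign t \<bar>a\<bar> = parity_sign t a"
  by (simp add: parity_sign_def)

lemma parity_sign_diff_flip: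
  assumes "t dvd a" "t dvd b" "\<not> 2 * t dvd b"
  shows "parity_sign t (a - b) = - parity_sign t a"
proof -
  obtain u v where u: "a = t * u" and v: "b = t * v" using assms(1,2) by (elim dvdE)
  have "t \<noteq> 0" and "odd v" using assms(3) v by auto
  have "2 * t dvd a - b \<longleftrightarrow> t * 2 dvd t * (u - v)" by (simp add: u v right_diff_distrib mult.commute)
  also have "\<dots> \<longleftrightarrow> even (u - v)" using \<open>t \<noteq> 0\<close> by (simp add: dvd_times_left_cancel_iff)
  also have "\<dots> \<longleftrightarrow> odd u" using \<open>odd v\<close> by simp
  also have "\<dots> \<longleftrightarrow> \<not> t * 2 dvd t * u" using \<open>t \<noteq> 0\<close> by (simp add: dvd_times_left_cancel_iff)
  finally show ?thesis unfolding parity_sign_def by (auto simp: u mult.commute)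
qed

lemma all_cong_mod_iff_base:
  assumes "c \<in> set s"
  shows "all_cong_mod k s \<longleftrightarrow> (\<forall>v\<in>set s. k dvd v - c)"
proof
  assume "\<forall>v\<in>set s. k dvd v - c"
  then have "k dvd u - v" if "u \<in> set s" "v \<in> set s" for u v
    using that dvd_diff[of k "u - c" "v - c"] by simp
  then show "all_cong_mod k s" unfolding all_cong_mod_def by simp
qed (use assms in \<open>simp add: all_cong_mod_def\<close>)

lemma abs_sign_balance_change_base:
  assumes "all_cong_mod t s" "c \<in> set s" "c' \<in> set s"
  shows "\<bar>sign_balance t c' s\<bar> = \<bar>sign_balance t c s\<bar>"
proof (cases "2 * t dvd c' - c")
  case True
  then have "parity_sign t (v - c') = parity_sign t (v - c)" for v
    by (intro parity_sign_cong) (simp add: dvd_diff_commute)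
  then show ?thesis by (simp add: sign_balance_def)
next
  case False
  have "t dvd v - c" "t dvd c' - c" if "v \<in> set s" for v
    using assms that by (simp_all add: all_cong_mod_def)
  then have "parity_sign t (v - c') = - parity_sign t (v - c)" if "v \<in> set s" for v
    using parity_sign_diff_flip[of t "v - c" "c' - c"] False that by simp
  then have "sign_balance t c' s = - sign_balance t c s"
    unfolding sign_balance_def uminus_sum_list_map comp_def by (metis (no_types, lifting) map_eq_conv)
  then show ?thesis by simp
qed

lemma invariants_agree_trans:
  assumes "t dvd p" "invariants_agree p t s s'" "invariants_agree p t s' s''"
  shows "invariants_agree p t s s''"
  using assms unfolding invariants_agree_def by metis

lemma dvd_mod_diff_mod_iff:
  fixes k p u v :: int
  assumes "k dvd p"
  shows "k dvd u mod p - v mod p \<longleftrightarrow> k dvd u - v"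
proof -
  have "p dvd (u mod p - v mod p) - (u - v)"
    using mod_diff_eq[of u p v] by (simp only: mod_eq_dvd_iff)
  then show ?thesis using assms by (metis diff_add_cancel dvd_add_right_iff dvd_trans)
qed

lemma all_cong_mod_map_mod:
  assumes "k dvd p"
  shows "all_cong_mod k (map (\<lambda>v. v mod p) s) \<longleftrightarrow> all_cong_mod k s"
  using dvd_mod_diff_mod_iff[OF assms] by (simp add: all_cong_mod_def)

lemma sign_balance_map_mod:
  assumes "2 * t dvd p"
  shows "sign_balance t (c mod p) (map (\<lambda>v. v mod p) s) = sign_balance t c s"
proof -
  have "parity_sign t (v mod p - c mod p) = parity_sign t (v - c)" for v
    using dvd_mod_diff_mod_iff[OF assms] unfolding parity_sign_def by simp
  then show ?thesis by (simp add: sign_balance_def comp_def)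
qed

lemma invariants_agree_if_map_mod_eq:
  assumes "2 * t dvd p" "s \<noteq> []" and mod_eq: "map (\<lambda>v. v mod p) s = map (\<lambda>v. v mod p) s'"
  shows "invariants_agree p t s s'"
proof -
  have "s' \<noteq> []" using mod_eq assms(2) by auto
  then have hd_mod: "hd s mod p = hd s' mod p"
    using arg_cong[OF mod_eq, of hd] assms(2) by (simp add: hd_map)
  have "sign_balance t (hd s) s = sign_balance t (hd s mod p) (map (\<lambda>v. v mod p) s)"
    by (simp add: sign_balance_map_mod[OF assms(1)])
  also have "\<dots> = sign_balance t (hd s' mod p) (map (\<lambda>v. v mod p) s')"
    by (simp only: hd_mod mod_eq)
  also have "\<dots> = sign_balance t (hd s') s'"
    by (simp add: sign_balance_map_mod[OF assms(1)])
  finally have "sign_balance t (hd s) s = sign_balance t (hd s') s'" .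
  moreover have "all_cong_mod k s \<longleftrightarrow> all_cong_mod k s'" if "k dvd p" for k
    using all_cong_mod_map_mod[OF that, of s] all_cong_mod_map_mod[OF that, of s'] mod_eq by simp
  ultimately show ?thesis by (simp add: invariants_agree_def)
qed

lemma invariants_agree_if_dist_mset_eq:
  assumes c: "c \<in> set s" and c': "c' \<in> set s'"
    and dist: "mset (map (\<lambda>v. \<bar>v - c\<bar>) s) = mset (map (\<lambda>v. \<bar>v - c'\<bar>) s')"
  shows "invariants_agree p t s s'"
proof -
  have dists: "(\<lambda>v. \<bar>v - c\<bar>) ` set s = (\<lambda>v. \<bar>v - c'\<bar>) ` set s'"
    using arg_cong[OF dist, of set_mset] by simp
  have "all_cong_mod k s \<longleftrightarrow> (\<forall>w\<in>(\<lambda>v. \<bar>v - c\<bar>) ` set s. k dvd w)"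
    and "all_cong_mod k s' \<longleftrightarrow> (\<forall>w\<in>(\<lambda>v. \<bar>v - c'\<bar>) ` set s'. k dvd w)" for k
    by (simp_all add: all_cong_mod_iff_base[OF c] all_cong_mod_iff_base[OF c'])
  then have cong: "all_cong_mod k s \<longleftrightarrow> all_cong_mod k s'" for k
    by (simp only: dists)
  have signs: "mset (map (parity_sign t) (map (\<lambda>v. \<bar>v - c\<bar>) s))
      = mset (map (parity_sign t) (map (\<lambda>v. \<bar>v - c'\<bar>) s'))"
    by (simp only: mset_map[of "parity_sign t"] dist)
  have "sum_list (map (parity_sign t) (map (\<lambda>v. \<bar>v - c\<bar>) s))
      = sum_list (map (parity_sign t) (map (\<lambda>v. \<bar>v - c'\<bar>) s'))"
    using arg_cong[OF signs, of sum_mset] by (simp only: sum_mset_sum_list)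
  then have balance: "sign_balance t c s = sign_balance t c' s'"
    by (simp add: sign_balance_def comp_def)
  have hd: "hd s \<in> set s" "hd s' \<in> set s'" using c c' by (auto intro: hd_in_set)
  show ?thesis unfolding invariants_agree_def
  proof (intro conjI allI impI)
    show "all_cong_mod k s = all_cong_mod k s'" for k by (rule cong)
  next
    assume t: "all_cong_mod t s"
    then have t': "all_cong_mod t s'" using cong by simp
    have "\<bar>sign_balance t (hd s) s\<bar> = \<bar>sign_balance t c s\<bar>"
      by (rule abs_sign_balance_change_base[OF t c hd(1)])
    also have "\<dots> = \<bar>sign_balance t (hd s') s'\<bar>"
      using abs_sign_balance_change_base[OF t' c' hd(2)] balance by simp
    finally show "\<bar>sign_balance t (hd s) s\<bar> = \<bar>sign_balance t (hd s') s'\<bar>" .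
  qed
qed

lemma mset_rotate1 [simp]: "mset (rotate1 xs) = mset xs"
  by (cases xs) simp_all

lemma invariants_agree_rotate1:
  assumes "s \<noteq> []"
  shows "invariants_agree p t s (rotate1 s)"
  using assms by (intro invariants_agree_if_dist_mset_eq[of "hd s" _ "hd s"]) (simp_all flip: rotate1_map)

lemma invariants_agree_reflect:
  assumes "s \<noteq> []"
  shows "invariants_agree p t s (map (\<lambda>v. C - v) s)"
proof (rule invariants_agree_if_dist_mset_eq[of "hd s" _ "C - hd s"])
  have "\<bar>(C - v) - (C - hd s)\<bar> = \<bar>v - hd s\<bar>" for v
    using abs_minus_commute[of "hd s" v] by simp
  then show "mset (map (\<lambda>v. \<bar>v - hd s\<bar>) s) = mset (map (\<lambda>v. \<bar>v - (C - hd s)\<bar>) (map (\<lambda>v. C - v) s))"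
    by (simp add: comp_def)
qed (use assms in simp_all)

lemma invariants_agree_reflect_swap:
  "invariants_agree p t (u # v # r) (v # (2 * v - u) # r)"
proof (rule invariants_agree_if_dist_mset_eq[of v _ v])
  show "mset (map (\<lambda>w. \<bar>w - v\<bar>) (u # v # r)) = mset (map (\<lambda>w. \<bar>w - v\<bar>) (v # (2 * v - u) # r))"
    using add_mset_commute[of "\<bar>u - v\<bar>" 0] abs_minus_commute[of u v] by simp
qed simp_all

lemma length_cyc_sums [simp]: "length (cyc_sums x) = length x"
  by (simp add: cyc_sums_def)

lemma nth_cyc_sums: "i < length x \<Longrightarrow> cyc_sums x ! i = x ! i + x ! ((i + 1) mod length x)"
  by (simp add: cyc_sums_def)

lemma tau_p_eq_Max_all_cong_mod:
  assumes "x \<noteq> []"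
  shows "tau_p p x = Max {k \<in> {1..p}. k dvd p \<and> all_cong_mod k (cyc_sums x)}"
proof -
  let ?s = "cyc_sums x"
  have "?s \<noteq> []" using assms by (simp flip: length_greater_0_conv)
  then have "hd ?s \<in> set ?s" "hd ?s = ?s ! 0" by (rule hd_in_set, rule hd_conv_nth)
  then have "(\<forall>i < length x. ?s ! i mod k = ?s ! 0 mod k) \<longleftrightarrow> all_cong_mod k ?s" for k
    by (simp add: all_cong_mod_iff_base mod_eq_dvd_iff all_set_conv_all_nth)
  then show ?thesis unfolding tau_p_def by simp
qed

lemma all_cong_mod_tau_p:
  assumes "x \<noteq> []" "p > 0"
  shows "all_cong_mod (tau_p p x) (cyc_sums x)"
proof -
  let ?S = "{k \<in> {1..p}. k dvd p \<and> all_cong_mod k (cyc_sums x)}"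
  have "finite ?S" by (rule finite_subset[of _ "{1..p}"]) auto
  moreover have "1 \<in> ?S" using assms(2) by (simp add: all_cong_mod_def)
  ultimately have "Max ?S \<in> ?S" using Max_in by blast
  then show ?thesis using tau_p_eq_Max_all_cong_mod[OF assms(1)] by simp
qed

lemma dvd_nth_minus_nth_mod_2:
  assumes cong: "all_cong_mod t (cyc_sums x)" and "i < length x"
  shows "t dvd x ! i - x ! (i mod 2)"
  using assms(2)
proof (induction i rule: less_induct)
  case (less i)
  show ?case
  proof (cases "i < 2")
    case True
    then show ?thesis by (cases i) auto
  next
    case False
    let ?s = "cyc_sums x"
    have "(i - 2 + 1) mod length x = i - 1" "(i - 1 + 1) mod length x = i"
      using less.prems False by auto
    then have "x ! i - x ! (i - 2) = ?s ! (i - 1) - ?s ! (i - 2)"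
      using less.prems by (simp add: nth_cyc_sums)
    moreover have "t dvd ?s ! (i - 1) - ?s ! (i - 2)"
      using cong less.prems unfolding all_cong_mod_def by simp
    moreover have "(i - 2) mod 2 = i mod 2"
      using False by (metis le_add_diff_inverse2 mod_add_self2 not_less)
    then have "t dvd x ! (i - 2) - x ! (i mod 2)"
      using less.IH[of "i - 2"] less.prems False by simp
    ultimately have "t dvd (x ! i - x ! (i - 2)) + (x ! (i - 2) - x ! (i mod 2))"
      by (simp add: dvd_add)
    then show ?thesis by simp
  qed
qed

lemma even_mod_quotient_iff:
  fixes t p b e :: int
  assumes "t > 0" "2 * t dvd p" "p dvd t * b - e"
  shows "even (b mod (p div t)) \<longleftrightarrow> 2 * t dvd e"
proof -
  have "2 * t dvd t * b - e" using assms(2,3) by (rule dvd_trans)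
  then have "2 * t dvd e \<longleftrightarrow> t * 2 dvd t * b"
    by (metis diff_add_cancel dvd_add_right_iff mult.commute)
  also have "\<dots> \<longleftrightarrow> even b" using assms(1) by simp
  also have "\<dots> \<longleftrightarrow> even (b mod (p div t))"
  proof -
    obtain m where "p = 2 * t * m" using assms(2) by (elim dvdE)
    then have "even (p div t)" using assms(1) by simp
    then show ?thesis by (simp add: dvd_mod_iff)
  qed
  finally show ?thesis by simp
qed

lemma even_normalized_cyc_sum_iff:
  assumes "t > 0" "2 * t dvd p" "even (length x)" "x \<noteq> []"
    and cong: "all_cong_mod t (cyc_sums x)" and i: "i < length x"
  defines "bs \<equiv> map (\<lambda>i. ((x ! i - x ! (i mod 2)) mod p) div t) [0..<length x]"
  shows "even (cyc_sums bs ! i mod (p div t)) \<longleftrightarrow> 2 * t dvd cyc_sums x ! i - hd (cyc_sums x)"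
proof -
  let ?n = "length x" and ?j = "(i + 1) mod length x"
  define d where "d k = (x ! k - x ! (k mod 2)) mod p" for k
  have j: "?j < ?n" using assms(4) by simp
  have "t dvd p" using assms(2) by (rule dvd_mult_right)
  then have t_dvd_d: "t dvd d k" if "k < ?n" for k
    unfolding d_def using dvd_nth_minus_nth_mod_2[OF cong that] by (simp add: dvd_mod)
  have "cyc_sums bs ! i = d i div t + d ?j div t"
    using i j by (simp add: bs_def d_def nth_cyc_sums)
  then have t_bs: "t * cyc_sums bs ! i = d i + d ?j"
    using t_dvd_d[OF i] t_dvd_d[OF j] by (simp add: distrib_left)
  have "?n \<ge> 2" using assms(3,4) by (metis dvd_imp_le length_greater_0_conv)
  then have hd_s: "hd (cyc_sums x) = x ! 0 + x ! 1"
    by (simp add: hd_conv_nth nth_cyc_sums flip: length_greater_0_conv)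
  have "?j mod 2 = (i + 1) mod 2" using assms(3) by (simp add: mod_mod_cancel)
  then have parities: "x ! (i mod 2) + x ! (?j mod 2) = x ! 0 + x ! 1"
    by (cases "even i") (auto simp: mod2_eq_if split: if_splits)
  have "p dvd (d i - (x ! i - x ! (i mod 2))) + (d ?j - (x ! ?j - x ! (?j mod 2)))"
    unfolding d_def by (intro dvd_add) (simp_all add: mod_eq_dvd_iff[symmetric])
  also have "(d i - (x ! i - x ! (i mod 2))) + (d ?j - (x ! ?j - x ! (?j mod 2)))
      = (d i + d ?j) - (cyc_sums x ! i - hd (cyc_sums x))"
    using i parities hd_s by (simp add: nth_cyc_sums)
  finally have "p dvd t * cyc_sums bs ! i - (cyc_sums x ! i - hd (cyc_sums x))"
    by (simp only: t_bs)
  then show ?thesis by (rule even_mod_quotient_iff[OF assms(1,2)])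
qed

lemma int_length_filter_minus_length_filter_not:
  "int (length (filter P xs)) - int (length (filter (\<lambda>v. \<not> P v) xs))
    = sum_list (map (\<lambda>v. if P v then 1 else -1) xs)"
  by (induction xs) auto

lemma mu_q_normalized_eq_sign_balance:
  assumes "t > 0" "2 * t dvd p" "even (length x)" "x \<noteq> []" "all_cong_mod t (cyc_sums x)"
  shows "mu_q (p div t) (map (\<lambda>i. ((x ! i - x ! (i mod 2)) mod p) div t) [0..<length x])
    = sign_balance t (hd (cyc_sums x)) (cyc_sums x)"
proof -
  let ?bs = "map (\<lambda>i. ((x ! i - x ! (i mod 2)) mod p) div t) [0..<length x]"
  have "map (\<lambda>v. if even (v mod (p div t)) then 1 else -1) (cyc_sums ?bs)
      = map (\<lambda>v. parity_sign t (v - hd (cyc_sums x))) (cyc_sums x)"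
    by (rule nth_equalityI) (simp_all add: even_normalized_cyc_sum_iff[OF assms] parity_sign_def)
  then show ?thesis
    unfolding mu_q_def sign_balance_def int_length_filter_minus_length_filter_not by simp
qed

lemma mu_p_tau_eq_sign_balance:
  assumes "p > 0" "t > 0" "2 * t dvd p" "x \<noteq> []" "even (length x)"
  shows "mu_p_tau p t x = (if tau_p p x = t
    then enat (nat \<bar>sign_balance t (hd (cyc_sums x)) (cyc_sums x)\<bar>) else \<infinity>)"
  using all_cong_mod_tau_p[OF assms(4,1)] mu_q_normalized_eq_sign_balance[OF assms(2,3,5,4)]
  by (auto simp: mu_p_tau_def)

lemma mu_p_tau_eq_if_invariants_agree:
  assumes "p > 0" "t > 0" "2 * t dvd p" "x \<noteq> []" "even (length x)" "length y = length x"
    and agree: "invariants_agree p t (cyc_sums x) (cyc_sums y)"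
  shows "mu_p_tau p t x = mu_p_tau p t y"
proof -
  have y: "y \<noteq> []" "even (length y)" using assms(4-6) by auto
  have "{k \<in> {1..p}. k dvd p \<and> all_cong_mod k (cyc_sums x)}
      = {k \<in> {1..p}. k dvd p \<and> all_cong_mod k (cyc_sums y)}"
    using agree unfolding invariants_agree_def by blast
  then have tau: "tau_p p x = tau_p p y"
    by (simp add: tau_p_eq_Max_all_cong_mod assms(4) y(1))
  show ?thesis
    using mu_p_tau_eq_sign_balance[OF assms(1-5)] mu_p_tau_eq_sign_balance[OF assms(1-3) y]
      all_cong_mod_tau_p[OF assms(4,1)] agree tau
    unfolding invariants_agree_def by auto
qed

lemma cyc_sums_rotate1: "cyc_sums (rotate1 x) = rotate1 (cyc_sums x)"
proof (rule nth_equalityI)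
  fix i assume "i < length (cyc_sums (rotate1 x))"
  then have "i < length x" "x \<noteq> []" by auto
  then show "cyc_sums (rotate1 x) ! i = rotate1 (cyc_sums x) ! i"
    by (simp add: nth_cyc_sums nth_rotate1 mod_Suc_eq)
qed simp

lemma cyc_sums_op2_mod:
  fixes x :: "int list" and a p :: int
  assumes "even (length x)"
  defines "y \<equiv> map (\<lambda>i. (x ! i + (-1) ^ (i + 1) * (x ! 0 - a)) mod p) [0..<length x]"
  shows "map (\<lambda>v. v mod p) (cyc_sums y) = map (\<lambda>v. v mod p) (cyc_sums x)"
proof (rule nth_equalityI)
  fix i assume "i < length (map (\<lambda>v. v mod p) (cyc_sums y))"
  then have i: "i < length x" by (simp add: y_def)
  let ?j = "(i + 1) mod length x"
  have "0 < length x" using i by linarith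
  then have j: "?j < length x" by simp
  have "even ?j \<longleftrightarrow> odd i"
    using assms(1) by (simp add: even_iff_mod_2_eq_zero mod_mod_cancel) presburger
  then have signs: "(-1::int) ^ (i + 1) + (-1) ^ (?j + 1) = 0"
    by (simp add: minus_one_power_iff)
  have "cyc_sums y ! i mod p
      = (x ! i + (-1) ^ (i + 1) * (x ! 0 - a) + (x ! ?j + (-1) ^ (?j + 1) * (x ! 0 - a))) mod p"
    using i j by (simp add: y_def nth_cyc_sums mod_add_eq)
  also have "x ! i + (-1) ^ (i + 1) * (x ! 0 - a) + (x ! ?j + (-1) ^ (?j + 1) * (x ! 0 - a))
      = x ! i + x ! ?j + ((-1) ^ (i + 1) + (-1) ^ (?j + 1)) * (x ! 0 - a)"
    by (simp add: algebra_simps)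
  also have "\<dots> = cyc_sums x ! i"
    using i by (simp only: signs) (simp add: nth_cyc_sums)
  finally show "map (\<lambda>v. v mod p) (cyc_sums y) ! i = map (\<lambda>v. v mod p) (cyc_sums x) ! i"
    using i by (simp add: y_def)
qed (simp add: y_def)

lemma cyc_sums_op3_mod:
  fixes x :: "int list" and a p :: int
  defines "y \<equiv> map (\<lambda>i. (x ! 0 - x ! i + a) mod p) [0..<length x]"
  shows "map (\<lambda>v. v mod p) (cyc_sums y)
    = map (\<lambda>v. v mod p) (map (\<lambda>v. 2 * (x ! 0 + a) - v) (cyc_sums x))"
proof (rule nth_equalityI)
  fix i assume "i < length (map (\<lambda>v. v mod p) (cyc_sums y))"
  then have i: "i < length x" by (simp add: y_def)
  let ?j = "(i + 1) mod length x"
  have "0 < length x" using i by linarith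
  then have j: "?j < length x" by simp
  have "cyc_sums y ! i mod p = (x ! 0 - x ! i + a + (x ! 0 - x ! ?j + a)) mod p"
    using i j by (simp add: y_def nth_cyc_sums mod_add_eq)
  also have "x ! 0 - x ! i + a + (x ! 0 - x ! ?j + a) = 2 * (x ! 0 + a) - cyc_sums x ! i"
    using i by (simp add: nth_cyc_sums)
  finally show "map (\<lambda>v. v mod p) (cyc_sums y) ! i
      = map (\<lambda>v. v mod p) (map (\<lambda>v. 2 * (x ! 0 + a) - v) (cyc_sums x)) ! i"
    using i by (simp add: y_def)
qed (simp add: y_def)

lemma cyc_sums_op4_mod:
  fixes x :: "int list" and p :: int
  assumes "3 < length x" and s: "cyc_sums x = u # v # r"
  defines "y \<equiv> x[1 := (- (x ! 0) + x ! 1 + x ! 2) mod p]"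
  shows "map (\<lambda>w. w mod p) (cyc_sums y) = map (\<lambda>w. w mod p) (v # (2 * v - u) # r)"
proof (rule nth_equalityI)
  show "length (map (\<lambda>w. w mod p) (cyc_sums y)) = length (map (\<lambda>w. w mod p) (v # (2 * v - u) # r))"
    using arg_cong[OF s, of length] by (simp add: y_def)
next
  let ?n = "length x"
  fix i assume "i < length (map (\<lambda>w. w mod p) (cyc_sums y))"
  then have i: "i < ?n" by (simp add: y_def)
  have n: "0 < ?n" "1 < ?n" "2 < ?n" using assms(1) by linarith+
  then have "cyc_sums x ! 0 = x ! 0 + x ! 1" "cyc_sums x ! 1 = x ! 1 + x ! 2"
    using assms(1) by (simp_all add: nth_cyc_sums numeral_2_eq_2)
  then have u: "u = x ! 0 + x ! 1" and v: "v = x ! 1 + x ! 2" by (simp_all add: s)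
  consider "i = 0" | "i = 1" | k where "i = Suc (Suc k)" by (metis not0_implies_Suc One_nat_def)
  then show "map (\<lambda>w. w mod p) (cyc_sums y) ! i = map (\<lambda>w. w mod p) (v # (2 * v - u) # r) ! i"
  proof cases
    case 1
    have "cyc_sums y ! 0 = x ! 0 + (- (x ! 0) + x ! 1 + x ! 2) mod p"
      using n by (simp add: y_def nth_cyc_sums)
    then have "cyc_sums y ! 0 mod p = v mod p" by (simp add: mod_add_right_eq v)
    with 1 show ?thesis using i by (simp add: y_def)
  next
    case 2
    have y1: "cyc_sums y ! 1 = (- (x ! 0) + x ! 1 + x ! 2) mod p + x ! 2"
      using n by (simp add: y_def nth_cyc_sums numeral_2_eq_2)
    have "- (x ! 0) + x ! 1 + x ! 2 + x ! 2 = 2 * v - u" by (simp add: u v)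
    then have "cyc_sums y ! 1 mod p = (2 * v - u) mod p" by (simp only: y1 mod_add_left_eq)
    with 2 show ?thesis using i by (simp add: y_def)
  next
    case (3 k)
    have "(i + 1) mod ?n \<noteq> 1" using i 3 assms(1)
      by (cases "i + 1 = ?n") auto
    then have "cyc_sums y ! i = cyc_sums x ! i" using i 3 by (simp add: y_def nth_cyc_sums)
    moreover have "length x = Suc (Suc (length r))" using arg_cong[OF s, of length] by simp
    ultimately show ?thesis using 3 s i by (simp add: y_def)
  qed
qed

lemma invariants_agree_op_step:
  assumes "2 * t dvd p" "op_step p x y"
  shows "invariants_agree p t (cyc_sums x) (cyc_sums y)"
proof -
  have x: "x \<noteq> []" "even (length x)" using assms(2) by (simp_all add: op_step_def Up_def)
  then have s: "cyc_sums x \<noteq> []" by (simp flip: length_greater_0_conv)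
  have "t dvd p" using assms(1) by (rule dvd_mult_right)
  from assms(2) consider "y = rotate1 x"
     | a where "y = map (\<lambda>i. (x ! i + (-1) ^ (i + 1) * (x ! 0 - a)) mod p) [0..<length x]"
     | a where "y = map (\<lambda>i. (x ! 0 - x ! i + a) mod p) [0..<length x]"
     | "length x > 3" "y = x[1 := (- (x ! 0) + x ! 1 + x ! 2) mod p]"
    unfolding op_step_def by blast
  then show ?thesis
  proof cases
    case 1
    then show ?thesis using invariants_agree_rotate1[OF s] by (simp add: cyc_sums_rotate1)
  next
    case (2 a)
    then have "map (\<lambda>v. v mod p) (cyc_sums x) = map (\<lambda>v. v mod p) (cyc_sums y)"
      using cyc_sums_op2_mod[OF x(2)] by simp
    then show ?thesis by (rule invariants_agree_if_map_mod_eq[OF assms(1) s])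
  next
    case (3 a)
    let ?C = "2 * (x ! 0 + a)"
    have "map (\<lambda>v. v mod p) (map (\<lambda>v. ?C - v) (cyc_sums x)) = map (\<lambda>v. v mod p) (cyc_sums y)"
      using 3 cyc_sums_op3_mod[where x = x and a = a and p = p] by simp
    then have "invariants_agree p t (map (\<lambda>v. ?C - v) (cyc_sums x)) (cyc_sums y)"
      using s by (intro invariants_agree_if_map_mod_eq[OF assms(1)]) simp_all
    with invariants_agree_reflect[OF s] show ?thesis
      by (rule invariants_agree_trans[OF \<open>t dvd p\<close>])
  next
    case 4
    have "length (cyc_sums x) = Suc (Suc (length x - 2))" using 4(1) by simp
    then obtain u v r where uvr: "cyc_sums x = u # v # r" unfolding length_Suc_conv by blast
    have "map (\<lambda>w. w mod p) (v # (2 * v - u) # r) = map (\<lambda>w. w mod p) (cyc_sums y)"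
      using 4 cyc_sums_op4_mod[OF 4(1) uvr] by simp
    then have "invariants_agree p t (v # (2 * v - u) # r) (cyc_sums y)"
      by (intro invariants_agree_if_map_mod_eq[OF assms(1)]) simp_all
    with invariants_agree_reflect_swap show ?thesis
      unfolding uvr by (rule invariants_agree_trans[OF \<open>t dvd p\<close>])
  qed
qed

lemma mu_p_tau_op_step:
  assumes "p > 0" "t > 0" "2 * t dvd p" "op_step p x y"
  shows "mu_p_tau p t x = mu_p_tau p t y"
proof (rule mu_p_tau_eq_if_invariants_agree[OF assms(1-3)])
  show "x \<noteq> []" "even (length x)" using assms(4) by (simp_all add: op_step_def Up_def)
  show "length y = length x" using assms(4) by (auto simp: op_step_def)
  show "invariants_agree p t (cyc_sums x) (cyc_sums y)"
    using assms(3,4) by (rule invariants_agree_op_step)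
qed

theorem mainTheorem4:
  fixes p \<tau> :: int and a b :: "int list"
  assumes "even p" and "p \<ge> 2"
    and "\<tau> \<in> {1..p}" and "even \<tau>" and "\<tau> dvd p" and "even (p div \<tau>)"
    and "a \<in> Up p" and "b \<in> Up p"
    and "equivalent p a b"
  shows "mu_p_tau p \<tau> a = mu_p_tau p \<tau> b"
proof -
  have "p > 0" "\<tau> > 0" using assms(2,3) by auto
  have "2 * \<tau> dvd \<tau> * (p div \<tau>)" using assms(6) by (simp add: mult.commute mult_dvd_mono)
  then have "2 * \<tau> dvd p" using assms(5) by simp
  have step: "mu_p_tau p \<tau> y = mu_p_tau p \<tau> z" if "op_step p y z \<or> op_step p z y" for y z
    using that mu_p_tau_op_step[OF \<open>p > 0\<close> \<open>\<tau> > 0\<close> \<open>2 * \<tau> dvd p\<close>] by metis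
  from assms(9) show ?thesis
    unfolding equivalent_def by (induction rule: equivclp_induct) (simp_all add: step)
qed

end
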